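(* Let $M$ be a free $\mathbb{T}$-module with a finite $\mathbb{T}$-basis, $V$ its associated complex vector space, and $(\cdot,\cdot)$ a bicomplex scalar product on $M$ which is hyperbolic positive and closed on $V$. Let $|\phi\rangle\in M$ and $|\psi\rangle\in V$. Then for $k=1,2$, $$\langle\phi_{\mathbf{e_k}}|(|\psi\rangle)=\langle\phi_{\mathbf{e_k}}|\psi\rangle,$$ where the left side is the functional $\langle\phi_{\mathbf{e_k}}|:|\chi\rangle\mapsto P_k(\langle\phi|\chi\rangle)$ evaluated at $|\psi\rangle$, and the right side is the scalar product $(|\phi_{\mathbf{e_k}}\rangle,|\psi\rangle)$ of the ket $|\phi_{\mathbf{e_k}}\rangle:=P_k(|\phi\rangle)\in V$ with $|\psi\rangle$.
   Context: Bicomplex numbers: $\mathbb{T}=\{z_1+z_2\mathbf{i_2}: z_1,z_2\in\mathbb{C}(\mathbf{i_1})\}$, $\mathbb{C}(\mathbf{i_1})=\{x+y\mathbf{i_1}: x,y\in\mathbb{R}\}$, $\mathbf{i_1}^2=\mathbf{i_2}^2=-1$, $\mathbf{i_1}\mathbf{i_2}=\mathbf{i_2}\mathbf{i_1}=\mathbf{j}$, $\mathbf{j}^2=1$ (commutative). Hyperbolic numbers $\mathbb{D}=\{x+y\mathbf{j}:x,y\in\mathbb{R}\}$. Idempotents $\mathbf{e_1}=(1+\mathbf{j})/2$, $\mathbf{e_2}=(1-\mathbf{j})/2$. Every $w=z_1+z_2\mathbf{i_2}$ is uniquely $w=(z_1-z_2\mathbf{i_1})\mathbf{e_1}+(z_1+z_2\mathbf{i_1})\mathbf{e_2}$;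 $P_1(w)=z_1-z_2\mathbf{i_1}$, $P_2(w)=z_1+z_2\mathbf{i_1}$. Conjugation: $(z_1+z_2\mathbf{i_2})^{\dagger_3}=\overline{z_1}-\overline{z_2}\mathbf{i_2}$. $\mathbb{D}^+=\{a\mathbf{e_1}+b\mathbf{e_2}: a,b\ge 0\}$. $M$ has $\mathbb{T}$-basis $\{|m_1\rangle,\dots,|m_n\rangle\}$, $V=\{\sum x_l|m_l\rangle: x_l\in\mathbb{C}(\mathbf{i_1})\}$; for $|\phi\rangle=\sum x_l|m_l\rangle$ with $x_l=x_{1l}\mathbf{e_1}+x_{2l}\mathbf{e_2}$, $x_{kl}\in\mathbb{C}(\mathbf{i_1})$, set $P_k(|\phi\rangle)=\sum_l x_{kl}|m_l\rangle\in V$. A bicomplex scalar product is a map $(\cdot,\cdot):M\times M\to\mathbb{T}$, additive in the second argument, with $(|\phi\rangle,\alpha|\psi\rangle)=\alpha(|\phi\rangle,|\psi\rangle)$ for $\alpha\in\mathbb{T}$, $(|\phi\rangle,|\psi\rangle)=(|\psi\rangle,|\phi\rangle)^{\dagger_3}$, $(|\phi\rangle,|\phi\rangle)=0\iff|\phi\rangle=0$; hyperbolic positive: $(|\phi\rangle,|\phi\rangle)\in\mathbb{D}^+$; closed on $V$: $(|\phi\rangle,|\psi\rangle)\in\mathbb{C}(\mathbf{i_1})$ for $|\phi\rangle,|\psi\rangle\in V$. The bra $\langle\phi|$ is the functional $|\psi\rangle\mapsto\langle\phi|\psi\rangle:=(|\phi\rangle,|\psi\rangle)$. *)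

theory Defs
  imports Complex_Main
begin

text \<open>Bicomplex numbers: a pair (z1, z2) of elements of C(i1) (= complex) stands for
  z1 + z2 i2.\<close>
type_synonym bicomplex = "complex \<times> complex"

definition bc_add :: "bicomplex \<Rightarrow> bicomplex \<Rightarrow> bicomplex" where
  "bc_add w v = (fst w + fst v, snd w + snd v)"

definition bc_mult :: "bicomplex \<Rightarrow> bicomplex \<Rightarrow> bicomplex" where
  "bc_mult w v = (fst w * fst v - snd w * snd v, fst w * snd v + snd w * fst v)"

definition bc_zero :: bicomplex where "bc_zero = (0, 0)"

definition bc_of_complex :: "complex \<Rightarrow> bicomplex" where
  "bc_of_complex z = (z, 0)"

definition bc_conj3 :: "bicomplex \<Rightarrow> bicomplex" where
  "bc_conj3 w = (cnj (fst w), - cnj (snd w))"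

definition bc_P1 :: "bicomplex \<Rightarrow> complex" where
  "bc_P1 w = fst w - snd w * \<i>"

definition bc_P2 :: "bicomplex \<Rightarrow> complex" where
  "bc_P2 w = fst w + snd w * \<i>"

definition bc_P :: "nat \<Rightarrow> bicomplex \<Rightarrow> complex" where
  "bc_P k w = (if k = 1 then bc_P1 w else bc_P2 w)"

text \<open>Idempotents e1 = (1+j)/2, e2 = (1-j)/2 with j = i1 i2 = (0, i).\<close>
definition bc_e1 :: bicomplex where "bc_e1 = (1/2, \<i>/2)"
definition bc_e2 :: bicomplex where "bc_e2 = (1/2, -\<i>/2)"

definition bc_hyp_pos :: "bicomplex \<Rightarrow> bool" where
  "bc_hyp_pos w \<longleftrightarrow> (\<exists>a b :: real. a \<ge> 0 \<and> b \<ge> 0 \<and>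
      w = bc_add (bc_mult (bc_of_complex (complex_of_real a)) bc_e1)
                 (bc_mult (bc_of_complex (complex_of_real b)) bc_e2))"

text \<open>The free T-module M with finite basis |m_l>, l :: 'n, is represented by coordinate
  vectors 'n \<Rightarrow> bicomplex.\<close>
definition vadd :: "('n \<Rightarrow> bicomplex) \<Rightarrow> ('n \<Rightarrow> bicomplex) \<Rightarrow> ('n \<Rightarrow> bicomplex)" where
  "vadd x y = (\<lambda>l. bc_add (x l) (y l))"

definition vscale :: "bicomplex \<Rightarrow> ('n \<Rightarrow> bicomplex) \<Rightarrow> ('n \<Rightarrow> bicomplex)" where
  "vscale \<alpha> x = (\<lambda>l. bc_mult \<alpha> (x l))"

definition vzero :: "'n \<Rightarrow> bicomplex" where "vzero = (\<lambda>l. bc_zero)"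

definition Vspace :: "('n \<Rightarrow> bicomplex) set" where
  "Vspace = {x. \<forall>l. snd (x l) = 0}"

definition vP :: "nat \<Rightarrow> ('n \<Rightarrow> bicomplex) \<Rightarrow> ('n \<Rightarrow> bicomplex)" where
  "vP k x = (\<lambda>l. bc_of_complex (bc_P k (x l)))"

definition bicomplex_scalar_product ::
  "(('n::finite \<Rightarrow> bicomplex) \<Rightarrow> ('n \<Rightarrow> bicomplex) \<Rightarrow> bicomplex) \<Rightarrow> bool" where
  "bicomplex_scalar_product sp \<longleftrightarrow>
     (\<forall>\<phi> \<psi> \<chi>. sp \<phi> (vadd \<psi> \<chi>) = bc_add (sp \<phi> \<psi>) (sp \<phi> \<chi>)) \<and>
     (\<forall>\<phi> \<psi> \<alpha>. sp \<phi> (vscale \<alpha> \<psi>) = bc_mult \<alpha> (sp \<phi> \<psi>)) \<and>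
     (\<forall>\<phi> \<psi>. sp \<phi> \<psi> = bc_conj3 (sp \<psi> \<phi>)) \<and>
     (\<forall>\<phi>. sp \<phi> \<phi> = bc_zero \<longleftrightarrow> \<phi> = vzero)"

definition hyperbolic_positive ::
  "(('n::finite \<Rightarrow> bicomplex) \<Rightarrow> ('n \<Rightarrow> bicomplex) \<Rightarrow> bicomplex) \<Rightarrow> bool" where
  "hyperbolic_positive sp \<longleftrightarrow> (\<forall>\<phi>. bc_hyp_pos (sp \<phi> \<phi>))"

definition closed_on_V ::
  "(('n::finite \<Rightarrow> bicomplex) \<Rightarrow> ('n \<Rightarrow> bicomplex) \<Rightarrow> bicomplex) \<Rightarrow> bool" where
  "closed_on_V sp \<longleftrightarrow> (\<forall>\<phi> \<in> Vspace. \<forall>\<psi> \<in> Vspace. snd (sp \<phi> \<psi>) = 0)"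

definition bra_ek ::
  "(('n \<Rightarrow> bicomplex) \<Rightarrow> ('n \<Rightarrow> bicomplex) \<Rightarrow> bicomplex) \<Rightarrow> nat \<Rightarrow>
   ('n \<Rightarrow> bicomplex) \<Rightarrow> ('n \<Rightarrow> bicomplex) \<Rightarrow> bicomplex" where
  "bra_ek sp k \<phi> = (\<lambda>\<chi>. bc_of_complex (bc_P k (sp \<phi> \<chi>)))"

end

theory Submission
  imports Defs
begin

text \<open>Write \<open>\<phi> = e\<^sub>1 P\<^sub>1(\<phi>) + e\<^sub>2 P\<^sub>2(\<phi>)\<close>. The scalar product is conjugate-linear in its
  first argument and the idempotents are fixed by \<open>\<dagger>\<^sub>3\<close>, so
  \<open>(\<phi>, \<psi>) = e\<^sub>1 (P\<^sub>1(\<phi>), \<psi>) + e\<^sub>2 (P\<^sub>2(\<phi>), \<psi>)\<close>. For \<open>\<psi> \<in> V\<close> both coefficients lie in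
  \<open>\<complex>(i\<^sub>1)\<close> because the product is closed on \<open>V\<close>, hence they are exactly the idempotent
  components of \<open>(\<phi>, \<psi>)\<close>.\<close>

lemma bc_conj3_add: "bc_conj3 (bc_add a b) = bc_add (bc_conj3 a) (bc_conj3 b)"
  by (simp add: bc_conj3_def bc_add_def)

lemma bc_conj3_mult: "bc_conj3 (bc_mult a b) = bc_mult (bc_conj3 a) (bc_conj3 b)"
  by (simp add: bc_conj3_def bc_mult_def)

lemma bc_conj3_e1: "bc_conj3 bc_e1 = bc_e1"
  and bc_conj3_e2: "bc_conj3 bc_e2 = bc_e2"
  by (simp_all add: bc_conj3_def bc_e1_def bc_e2_def)

lemma bc_of_complex_fst: "snd w = 0 \<Longrightarrow> bc_of_complex (fst w) = w"
  by (simp add: bc_of_complex_def prod_eq_iff)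

lemma bc_P_idempotent_sum:
  assumes "snd a = 0" and "snd b = 0"
  shows "bc_P 1 (bc_add (bc_mult bc_e1 a) (bc_mult bc_e2 b)) = fst a"
    and "bc_P 2 (bc_add (bc_mult bc_e1 a) (bc_mult bc_e2 b)) = fst b"
  using assms
  by (simp_all add: bc_P_def bc_P1_def bc_P2_def bc_add_def bc_mult_def bc_e1_def bc_e2_def
      complex_eq_iff add_divide_distrib[symmetric] diff_divide_distrib[symmetric])

lemma vP_in_Vspace: "vP k \<phi> \<in> Vspace"
  by (simp add: Vspace_def vP_def bc_of_complex_def)

lemma idempotent_decomposition: "\<phi> = vadd (vscale bc_e1 (vP 1 \<phi>)) (vscale bc_e2 (vP 2 \<phi>))"
proof
  fix l
  show "\<phi> l = vadd (vscale bc_e1 (vP 1 \<phi>)) (vscale bc_e2 (vP 2 \<phi>)) l"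
    by (cases "\<phi> l")
      (simp add: vadd_def vscale_def vP_def bc_add_def bc_mult_def bc_e1_def bc_e2_def
        bc_of_complex_def bc_P_def bc_P1_def bc_P2_def complex_eq_iff
        add_divide_distrib[symmetric] diff_divide_distrib[symmetric])
qed

context
  fixes sp :: "('n::finite \<Rightarrow> bicomplex) \<Rightarrow> ('n \<Rightarrow> bicomplex) \<Rightarrow> bicomplex"
  assumes sp: "bicomplex_scalar_product sp"
begin

lemma sp_add_right: "sp \<phi> (vadd \<psi> \<chi>) = bc_add (sp \<phi> \<psi>) (sp \<phi> \<chi>)"
  and sp_scale_right: "sp \<phi> (vscale \<alpha> \<psi>) = bc_mult \<alpha> (sp \<phi> \<psi>)"
  and sp_conj_sym: "sp \<phi> \<psi> = bc_conj3 (sp \<psi> \<phi>)"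
  using sp unfolding bicomplex_scalar_product_def by blast+

lemma sp_add_left: "sp (vadd \<phi> \<chi>) \<psi> = bc_add (sp \<phi> \<psi>) (sp \<chi> \<psi>)"
proof -
  have "sp (vadd \<phi> \<chi>) \<psi> = bc_conj3 (sp \<psi> (vadd \<phi> \<chi>))"
    by (rule sp_conj_sym)
  also have "\<dots> = bc_add (bc_conj3 (sp \<psi> \<phi>)) (bc_conj3 (sp \<psi> \<chi>))"
    by (simp only: sp_add_right bc_conj3_add)
  finally show ?thesis
    by (simp only: sp_conj_sym[of \<phi> \<psi>] sp_conj_sym[of \<chi> \<psi>])
qed

lemma sp_scale_left: "sp (vscale \<alpha> \<phi>) \<psi> = bc_mult (bc_conj3 \<alpha>) (sp \<phi> \<psi>)"
proof -
  have "sp (vscale \<alpha> \<phi>) \<psi> = bc_conj3 (sp \<psi> (vscale \<alpha> \<phi>))"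
    by (rule sp_conj_sym)
  also have "\<dots> = bc_mult (bc_conj3 \<alpha>) (bc_conj3 (sp \<psi> \<phi>))"
    by (simp only: sp_scale_right bc_conj3_mult)
  finally show ?thesis
    by (simp only: sp_conj_sym[of \<phi> \<psi>])
qed

lemma sp_idempotent_split:
  "sp \<phi> \<psi> = bc_add (bc_mult bc_e1 (sp (vP 1 \<phi>) \<psi>)) (bc_mult bc_e2 (sp (vP 2 \<phi>) \<psi>))"
  by (subst idempotent_decomposition[of \<phi>]) (simp only: sp_add_left sp_scale_left bc_conj3_e1 bc_conj3_e2)

end

theorem mainTheorem17:
  fixes sp :: "('n::finite \<Rightarrow> bicomplex) \<Rightarrow> ('n \<Rightarrow> bicomplex) \<Rightarrow> bicomplex"
    and \<phi> \<psi> :: "'n \<Rightarrow> bicomplex"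
    and k :: nat
  assumes "bicomplex_scalar_product sp"
    and "hyperbolic_positive sp"
    and "closed_on_V sp"
    and "\<psi> \<in> Vspace"
    and "k \<in> {1, 2}"
  shows "bra_ek sp k \<phi> \<psi> = sp (vP k \<phi>) \<psi>"
proof -
  have closed: "snd (sp (vP j \<phi>) \<psi>) = 0" for j
    using assms(3,4) vP_in_Vspace unfolding closed_on_V_def by blast
  from assms(5) consider "k = 1" | "k = 2"
    by blast
  then have "bc_P k (sp \<phi> \<psi>) = fst (sp (vP k \<phi>) \<psi>)"
    by cases (simp_all only: sp_idempotent_split[OF assms(1), of \<phi> \<psi>]
        bc_P_idempotent_sum[OF closed closed])
  then show ?thesis
    unfolding bra_ek_def using bc_of_complex_fst[OF closed] by simp
qed

end
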